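(* Let $A$ be a normalized real $n\times n$ matrix. For any two stationary points $x_1^\star,x_2^\star\in\Delta_n$ of $f_A$, $$|f_A(x_1^\star)-f_A(x_2^\star)|\le (x_1^\star-x_2^\star)^\tau A(x_1^\star-x_2^\star).$$
   Context: $\Delta_n=\{u\in\mathbb{R}^n:u\ge0,\ e^\tau u=1\}$ ($e$ the all-ones vector). A square matrix is normalized if its maximum entry is $1$ and its minimum entry is $0$. For $u\in\mathbb{R}^n$, $\max(u)$ is its largest entry. $f_A(x)=\max(Ax)-x^\tau Ax$ for $x\in\Delta_n$. For $x,x'\in\Delta_n$, $D_A(x',x)=\lim_{\epsilon\to0^+}\frac1\epsilon\big(f_A((1-\epsilon)x+\epsilon x')-f_A(x)\big)$ (this limit exists). A point $x^\star\in\Delta_n$ is a stationary point of $f_A$ if $D_A(x,x^\star)\ge0$ for all $x\in\Delta_n$. *)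

theory Defs
  imports "HOL-Analysis.Analysis"
begin

definition std_simplex :: "(real^'n) set" where
  "std_simplex = {u. (\<forall>i. 0 \<le> u $ i) \<and> (\<Sum>i\<in>UNIV. u $ i) = 1}"

definition vmax :: "real^'n \<Rightarrow> real" where
  "vmax u = Max (range (\<lambda>i. u $ i))"

definition normalized :: "real^'n^'n \<Rightarrow> bool" where
  "normalized A \<longleftrightarrow> Max {A $ i $ j | i j. True} = 1 \<and> Min {A $ i $ j | i j. True} = 0"

definition fA :: "real^'n^'n \<Rightarrow> real^'n \<Rightarrow> real" where
  "fA A x = vmax (A *v x) - x \<bullet> (A *v x)"

definition DA :: "real^'n^'n \<Rightarrow> real^'n \<Rightarrow> real^'n \<Rightarrow> real" where
  "DA A x' x = Lim (at_right 0)
     (\<lambda>\<epsilon>. (fA A ((1 - \<epsilon>) *\<^sub>R x + \<epsilon> *\<^sub>R x') - fA A x) / \<epsilon>)"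

definition stationary :: "real^'n^'n \<Rightarrow> real^'n \<Rightarrow> bool" where
  "stationary A xs \<longleftrightarrow> xs \<in> std_simplex \<and> (\<forall>x\<in>std_simplex. DA A x xs \<ge> 0)"

end

theory Submission
  imports Defs
begin

text \<open>Along a segment \<open>x + e y\<close>, the function \<open>f\<^sub>A\<close> is a convex function of \<open>e\<close>
  (the maximum of the affine functions \<open>e \<mapsto> (A(x + e y))\<^sub>i\<close> minus an affine term) minus
  \<open>e\<^sup>2 y\<^sup>\<tau>Ay\<close>. A convex function has a right derivative bounded by its secant slope, so
  \<open>D\<^sub>A(x', x) \<le> f\<^sub>A(x') - f\<^sub>A(x) + (x' - x)\<^sup>\<tau>A(x' - x)\<close>. Applying this at two stationary points
  in both directions gives the two halves of the absolute value.\<close>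

lemma vmax_ge: "u $ i \<le> vmax u"
  unfolding vmax_def by (rule Max_ge) auto

lemma vmax_attained: "\<exists>i. vmax u = u $ i"
proof -
  have "vmax u \<in> range (\<lambda>i. u $ i)"
    unfolding vmax_def by (rule Max_in) auto
  then show ?thesis by auto
qed

lemma convex_on_vmax: "convex_on UNIV vmax"
proof (rule convex_onI)
  fix t :: real and u v :: "real^'n"
  assume "0 < t" "t < 1"
  obtain i where i: "vmax ((1 - t) *\<^sub>R u + t *\<^sub>R v) = ((1 - t) *\<^sub>R u + t *\<^sub>R v) $ i"
    using vmax_attained by blast
  have "(1 - t) * u $ i \<le> (1 - t) * vmax u" "t * v $ i \<le> t * vmax v"
    using \<open>0 < t\<close> \<open>t < 1\<close> vmax_ge by (auto intro: mult_left_mono)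
  then show "vmax ((1 - t) *\<^sub>R u + t *\<^sub>R v) \<le> (1 - t) * vmax u + t * vmax v"
    using i by simp
qed simp

lemma convex_on_along_line:
  assumes "convex_on UNIV f"
  shows "convex_on UNIV (\<lambda>e::real. f (a + e *\<^sub>R b))"
proof (rule convex_onI)
  fix t x y :: real
  assume "0 < t" "t < 1"
  have "a + ((1 - t) *\<^sub>R x + t *\<^sub>R y) *\<^sub>R b = (1 - t) *\<^sub>R (a + x *\<^sub>R b) + t *\<^sub>R (a + y *\<^sub>R b)"
    by (simp add: algebra_simps)
  then show "f (a + ((1 - t) *\<^sub>R x + t *\<^sub>R y) *\<^sub>R b) \<le> (1 - t) * f (a + x *\<^sub>R b) + t * f (a + y *\<^sub>R b)"
    using \<open>0 < t\<close> \<open>t < 1\<close> convex_onD[OF assms] by simp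
qed simp

lemma concave_on_affine: "concave_on UNIV (\<lambda>e::real. c + e * b)"
  by (auto simp: concave_on_iff algebra_simps simp flip: distrib_right)

lemma convex_on_right_slope_tendsto:
  fixes f :: "real \<Rightarrow> real"
  assumes f: "convex_on UNIV f" and "0 < t"
  obtains L where "((\<lambda>e. (f (x + e) - f x) / e) \<longlongrightarrow> L) (at_right 0)"
    and "L \<le> (f (x + t) - f x) / t"
proof -
  define s where "s e = (f (x + e) - f x) / e" for e
  have mono: "s a \<le> s b" if "0 < a" "a \<le> b" for a b
  proof (cases "a = b")
    case False
    then have "(f x - f (x + b)) / b \<le> (f x - f (x + a)) / a"
      using convex_on_slope_le(1)[OF f, of x "x + b" "x + a"] that by simp
    then show ?thesis
      unfolding s_def by (smt (verit) minus_diff_eq minus_divide_left)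
  qed simp
  have bound: "f x - f (x - 1) \<le> s a" if "0 < a" for a
    using convex_on_slope_le[OF f, of "x - 1" "x + a" x] that unfolding s_def
    by (simp add: minus_divide_left)
  have "(s \<longlongrightarrow> Inf (s ` {0<..})) (at_right 0)"
    using Lim_right_bound[of UNIV 0 s "f x - f (x - 1)"] mono bound by simp
  moreover have "Inf (s ` {0<..}) \<le> s t"
    using \<open>0 < t\<close> bound by (intro cInf_lower bdd_belowI2) auto
  ultimately show thesis
    using that unfolding s_def by blast
qed

lemma DA_le:
  fixes A :: "real^'n^'n" and x x' :: "real^'n"
  shows "DA A x' x \<le> fA A x' - fA A x + (x' - x) \<bullet> (A *v (x' - x))"
proof -
  define y where "y = x' - x"
  define a where "a = y \<bullet> (A *v y)"
  define \<psi> where "\<psi> e = vmax (A *v x + e *\<^sub>R (A *v y))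
    - (x \<bullet> (A *v x) + e * (x \<bullet> (A *v y) + y \<bullet> (A *v x)))" for e
  have segment: "(1 - e) *\<^sub>R x + e *\<^sub>R x' = x + e *\<^sub>R y" for e
    by (simp add: y_def algebra_simps)
  have fA_segment: "fA A (x + e *\<^sub>R y) = \<psi> e - e\<^sup>2 * a" for e
    unfolding fA_def \<psi>_def a_def
    by (simp add: algebra_simps inner_add_left inner_add_right power2_eq_square)
  have "convex_on UNIV \<psi>"
    unfolding \<psi>_def
    by (intro convex_on_diff convex_on_along_line convex_on_vmax concave_on_affine)
  then obtain L where L: "((\<lambda>e. (\<psi> (0 + e) - \<psi> 0) / e) \<longlongrightarrow> L) (at_right 0)"
    and L_le: "L \<le> (\<psi> (0 + 1) - \<psi> 0) / 1"
    using convex_on_right_slope_tendsto[where f=\<psi> and t=1 and x=0] by auto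
  have quotient: "(fA A ((1 - e) *\<^sub>R x + e *\<^sub>R x') - fA A x) / e = (\<psi> e - \<psi> 0) / e - e * a"
    if "e \<noteq> 0" for e
    using fA_segment[of e] fA_segment[of 0] that unfolding segment
    by (simp add: field_simps power2_eq_square)
  have "((\<lambda>e. e * a) \<longlongrightarrow> 0) (at_right 0)"
    by (intro tendsto_mult_left_zero tendsto_ident_at)
  with L have "((\<lambda>e. (\<psi> e - \<psi> 0) / e - e * a) \<longlongrightarrow> L) (at_right 0)"
    using tendsto_diff by fastforce
  then have "((\<lambda>e. (fA A ((1 - e) *\<^sub>R x + e *\<^sub>R x') - fA A x) / e) \<longlongrightarrow> L) (at_right 0)"
    by (rule Lim_transform_eventually) (auto simp: eventually_at_filter quotient)
  then have "DA A x' x = L"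
    unfolding DA_def by (intro tendsto_Lim) auto
  also have "\<dots> \<le> \<psi> 1 - \<psi> 0"
    using L_le by simp
  also have "\<dots> = fA A x' - fA A x + a"
    using fA_segment[of 1] fA_segment[of 0] by (simp add: y_def)
  finally show ?thesis
    by (simp add: a_def y_def)
qed

theorem theorem7:
  fixes A :: "real^'n^'n" and x1 x2 :: "real^'n"
  assumes "normalized A"
    and "stationary A x1" and "stationary A x2"
  shows "\<bar>fA A x1 - fA A x2\<bar> \<le> (x1 - x2) \<bullet> (A *v (x1 - x2))"
proof -
  have "0 \<le> DA A x2 x1" "0 \<le> DA A x1 x2"
    using assms(2,3) unfolding stationary_def by auto
  moreover have "(x2 - x1) \<bullet> (A *v (x2 - x1)) = (x1 - x2) \<bullet> (A *v (x1 - x2))"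
    by (simp add: inner_diff_left inner_diff_right matrix_vector_mult_diff_distrib)
  ultimately show ?thesis
    using DA_le[of A x2 x1] DA_le[of A x1 x2] by linarith
qed

end
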